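(* Let $G$ be a finite chordal graph and let $t\ge 0$ be an integer. Then $\hat\beta_t(G)=1$.
   Context: All graphs are finite and simple. For an integer $t\ge 0$, a graph $H$ is a $t$-shallow minor ($t$-minor) of a graph $G$ if $H$ can be obtained from $G$ by contracting pairwise vertex-disjoint connected subgraphs, each of radius at most $t$, into single vertices and deleting vertices (but not edges). Equivalently, there are pairwise disjoint sets $V_v\subseteq V(G)$, $v\in V(H)$, each inducing a connected subgraph of $G$ of radius at most $t$, such that $uv\in E(H)$ if and only if some edge of $G$ joins $V_u$ and $V_v$. In particular every induced subgraph of $G$ is a $t$-minor of $G$. For a graph $H$, $\beta(H)$ denotes the clique cover number of $H$: the minimum number of cliques partitioning $V(H)$. For $x\in V(H)$, $H_x$ denotes the subgraph of $H$ induced by the closed neighborhood $N_H[x]=\{x\}\cup N_H(x)$. Define $\tilde\beta(H)=\min_{x\in V(H)}\beta(H_x)$, and $\hat\beta_t(G)=\max\{\tilde\beta(H): H \text{ a nonempty } t\text{-minor of } G\}$ (the largest reduced neighborhood clique cover number of $G$). A graph is chordal if it has no induced cycle of length at least $4$. *)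

theory Defs
  imports Main
begin

definition simple_graph :: "'a set \<Rightarrow> ('a \<Rightarrow> 'a \<Rightarrow> bool) \<Rightarrow> bool" where
  "simple_graph V E \<longleftrightarrow> finite V \<and>
     (\<forall>u v. E u v \<longrightarrow> u \<in> V \<and> v \<in> V \<and> u \<noteq> v \<and> E v u)"

definition induced_cycle :: "'a set \<Rightarrow> ('a \<Rightarrow> 'a \<Rightarrow> bool) \<Rightarrow> 'a list \<Rightarrow> bool" where
  "induced_cycle V E xs \<longleftrightarrow> distinct xs \<and> set xs \<subseteq> V \<and> length xs \<ge> 3 \<and>
     (\<forall>i<length xs. \<forall>j<length xs.
        E (xs ! i) (xs ! j) \<longleftrightarrow>
          (j = Suc i mod length xs \<or> i = Suc j mod length xs))"

definition chordal :: "'a set \<Rightarrow> ('a \<Rightarrow> 'a \<Rightarrow> bool) \<Rightarrow> bool" where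
  "chordal V E \<longleftrightarrow> (\<forall>xs. induced_cycle V E xs \<longrightarrow> length xs < 4)"

definition walk_in :: "('a \<Rightarrow> 'a \<Rightarrow> bool) \<Rightarrow> 'a set \<Rightarrow> 'a list \<Rightarrow> bool" where
  "walk_in E S xs \<longleftrightarrow> xs \<noteq> [] \<and> set xs \<subseteq> S \<and>
     (\<forall>i. Suc i < length xs \<longrightarrow> E (xs ! i) (xs ! Suc i))"

text \<open>G[S] is connected with radius at most t (S nonempty): some centre c reaches
every vertex of S by a walk in G[S] of length (number of edges) at most t.\<close>
definition conn_radius_le :: "('a \<Rightarrow> 'a \<Rightarrow> bool) \<Rightarrow> 'a set \<Rightarrow> nat \<Rightarrow> bool" where
  "conn_radius_le E S t \<longleftrightarrow> (\<exists>c\<in>S. \<forall>x\<in>S. \<exists>xs.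
      walk_in E S xs \<and> hd xs = c \<and> last xs = x \<and> length xs \<le> Suc t)"

text \<open>(W,F) is a t-shallow minor of (V,E), witnessed by branch sets Vs.
 The minor's vertices are taken from the same type as those of G (every minor is
 isomorphic to one of this form, by picking one vertex from each branch set).\<close>
definition shallow_minor :: "nat \<Rightarrow> 'a set \<Rightarrow> ('a \<Rightarrow> 'a \<Rightarrow> bool) \<Rightarrow>
    'a set \<Rightarrow> ('a \<Rightarrow> 'a \<Rightarrow> bool) \<Rightarrow> bool" where
  "shallow_minor t V E W F \<longleftrightarrow> finite W \<and> (\<exists>Vs :: 'a \<Rightarrow> 'a set.
     (\<forall>v\<in>W. Vs v \<subseteq> V \<and> Vs v \<noteq> {} \<and> conn_radius_le E (Vs v) t) \<and>
     (\<forall>u\<in>W. \<forall>v\<in>W. u \<noteq> v \<longrightarrow> Vs u \<inter> Vs v = {}) \<and>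
     (\<forall>u v. F u v \<longleftrightarrow> u \<in> W \<and> v \<in> W \<and> u \<noteq> v \<and> (\<exists>a\<in>Vs u. \<exists>b\<in>Vs v. E a b)))"

definition is_clique :: "('a \<Rightarrow> 'a \<Rightarrow> bool) \<Rightarrow> 'a set \<Rightarrow> bool" where
  "is_clique F C \<longleftrightarrow> (\<forall>x\<in>C. \<forall>y\<in>C. x \<noteq> y \<longrightarrow> F x y)"

definition clique_partition :: "'a set \<Rightarrow> ('a \<Rightarrow> 'a \<Rightarrow> bool) \<Rightarrow> 'a set set \<Rightarrow> bool" where
  "clique_partition W F P \<longleftrightarrow> \<Union>P = W \<and> (\<forall>C\<in>P. C \<noteq> {} \<and> is_clique F C) \<and>
     (\<forall>C\<in>P. \<forall>D\<in>P. C \<noteq> D \<longrightarrow> C \<inter> D = {})"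

definition clique_cover_number :: "'a set \<Rightarrow> ('a \<Rightarrow> 'a \<Rightarrow> bool) \<Rightarrow> nat" where
  "clique_cover_number W F = (LEAST n. \<exists>P. clique_partition W F P \<and> finite P \<and> card P = n)"

definition closed_nbhd :: "'a set \<Rightarrow> ('a \<Rightarrow> 'a \<Rightarrow> bool) \<Rightarrow> 'a \<Rightarrow> 'a set" where
  "closed_nbhd W F x = insert x {y\<in>W. F x y}"

text \<open>beta of H_x (induced subgraph on the closed neighbourhood); induced edges are
 just F restricted, and clique partitions only look at pairs inside the vertex set.\<close>
definition tilde_beta :: "'a set \<Rightarrow> ('a \<Rightarrow> 'a \<Rightarrow> bool) \<Rightarrow> nat" where
  "tilde_beta W F = Min ((\<lambda>x. clique_cover_number (closed_nbhd W F x)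
       (\<lambda>u v. F u v \<and> u \<in> closed_nbhd W F x \<and> v \<in> closed_nbhd W F x)) ` W)"

definition hat_beta :: "nat \<Rightarrow> 'a set \<Rightarrow> ('a \<Rightarrow> 'a \<Rightarrow> bool) \<Rightarrow> nat" where
  "hat_beta t V E = Max {tilde_beta W F | W F. shallow_minor t V E W F \<and> W \<noteq> {}}"

end

theory Submission
  imports Defs
begin

text \<open>A chordal graph has a simplicial vertex s (Dirac). Deleting s keeps the graph chordal and
  keeps every branch set of a minor connected, since shortest paths avoid simplicial vertices.
  If s forms a branch set on its own, that branch vertex is simplicial in the minor, because the
  branch sets meeting N(s) pairwise touch; otherwise removing s from its branch set changes no
  adjacency of the minor, as every edge at s can be rerouted through a neighbour of s in the same
  branch set. By induction on |V|, every minor of a chordal graph therefore has a vertex whose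
  closed neighbourhood is a clique, so its reduced clique cover number is 1.\<close>

lemma walk_in_singleton [simp]: "walk_in E S [x] \<longleftrightarrow> x \<in> S"
  by (auto simp: walk_in_def)

lemma walk_in_Cons_Cons:
  "walk_in E S (x # y # zs) \<longleftrightarrow> x \<in> S \<and> E x y \<and> walk_in E S (y # zs)"
  by (auto simp: walk_in_def nth_Cons split: nat.splits)

lemma walk_in_nonempty: "walk_in E S p \<Longrightarrow> p \<noteq> []"
  by (simp add: walk_in_def)

lemma walk_in_append:
  "walk_in E S p \<Longrightarrow> walk_in E S q \<Longrightarrow> E (last p) (hd q) \<Longrightarrow> walk_in E S (p @ q)"
proof (induction p rule: induct_list012)
  case 1 then show ?case by (simp add: walk_in_def)
next
  case (2 x) then show ?case by (cases q) (auto simp: walk_in_Cons_Cons)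
next
  case (3 x y zs) then show ?case by (simp add: walk_in_Cons_Cons)
qed

lemma walk_in_glue:
  "walk_in E S p \<Longrightarrow> walk_in E S q \<Longrightarrow> last p = hd q \<Longrightarrow> walk_in E S (p @ tl q)"
proof (induction p rule: induct_list012)
  case 1 then show ?case by (simp add: walk_in_def)
next
  case (2 x) then show ?case by (cases q) auto
next
  case (3 x y zs) then show ?case by (simp add: walk_in_Cons_Cons)
qed

lemma last_append_tl: "p \<noteq> [] \<Longrightarrow> q \<noteq> [] \<Longrightarrow> last p = hd q \<Longrightarrow> last (p @ tl q) = last q"
  by (cases q) auto

lemma walk_in_rev:
  assumes "walk_in E S p" and "\<And>u v. E u v \<Longrightarrow> E v u"
  shows "walk_in E S (rev p)"
  using assms(1)
proof (induction p rule: induct_list012)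
  case (3 x y zs)
  then show ?case
    using walk_in_append[of E S "rev zs @ [y]" "[x]"] assms(2) by (auto simp: walk_in_Cons_Cons)
qed (auto simp: walk_in_def)

lemma walk_in_mono:
  assumes "walk_in E S p" "set p \<subseteq> T" "\<And>u v. u \<in> T \<Longrightarrow> v \<in> T \<Longrightarrow> E u v \<Longrightarrow> E' u v"
  shows "walk_in E' T p"
  using assms unfolding walk_in_def by (metis Suc_lessD nth_mem subsetD)

lemma walk_in_take: "walk_in E S p \<Longrightarrow> 0 < n \<Longrightarrow> walk_in E S (take n p)"
  by (auto simp: walk_in_def dest: in_set_takeD)

lemma walk_in_drop: "walk_in E S p \<Longrightarrow> n < length p \<Longrightarrow> walk_in E S (drop n p)"
  by (auto simp: walk_in_def dest: in_set_dropD)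

lemma walk_in_join:
  assumes sym: "\<And>u v. E u v \<Longrightarrow> E v u"
    and p: "walk_in E S p" and q: "walk_in E S q" and hd: "hd p = hd q"
  shows "\<exists>r. walk_in E S r \<and> hd r = last p \<and> last r = last q"
proof (intro exI conjI)
  have ne: "rev p \<noteq> []" "q \<noteq> []" using p q by (auto simp: walk_in_def)
  have glue: "last (rev p) = hd q" using ne hd by (simp add: last_rev hd_rev)
  show "walk_in E S (rev p @ tl q)" using walk_in_glue[OF walk_in_rev[OF p sym] q glue] .
  show "hd (rev p @ tl q) = last p" using ne by (simp add: hd_rev)
  show "last (rev p @ tl q) = last q" using last_append_tl[OF ne glue] .
qed

lemma walk_in_shortcut:
  assumes w: "walk_in E S p" and ij: "i < j" "j < length p"
    and jump: "p ! i = p ! j \<or> (Suc i < j \<and> E (p ! i) (p ! j))"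
  shows "\<exists>q. walk_in E S q \<and> hd q = hd p \<and> last q = last p \<and> length q < length p"
proof -
  let ?pre = "take (Suc i) p" and ?suf = "drop j p"
  have pre: "walk_in E S ?pre" "hd ?pre = hd p" "last ?pre = p ! i"
    using walk_in_take[OF w, of "Suc i"] ij
    by (simp, simp, simp add: take_Suc_conv_app_nth)
  have suf: "walk_in E S ?suf" "hd ?suf = p ! j" "last ?suf = last p"
    using walk_in_drop[OF w ij(2)] ij by (auto simp: hd_drop_conv_nth)
  have ne: "?pre \<noteq> []" "?suf \<noteq> []" using ij by auto
  from jump show ?thesis
  proof
    assume "p ! i = p ! j"
    then have glue: "last ?pre = hd ?suf" using pre(3) suf(2) by simp
    show ?thesis
    proof (intro exI conjI)
      show "walk_in E S (?pre @ tl ?suf)" using walk_in_glue[OF pre(1) suf(1) glue] .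
      show "last (?pre @ tl ?suf) = last p" using last_append_tl[OF ne glue] suf(3) by simp
    qed (use ij ne pre(2) in auto)
  next
    assume "Suc i < j \<and> E (p ! i) (p ! j)"
    then show ?thesis
      using walk_in_append[OF pre(1) suf(1)] pre suf ne ij
      by (intro exI[of _ "?pre @ ?suf"]) auto
  qed
qed

definition chordless :: "('a \<Rightarrow> 'a \<Rightarrow> bool) \<Rightarrow> 'a list \<Rightarrow> bool" where
  "chordless E p \<longleftrightarrow> distinct p \<and>
     (\<forall>i j. i < j \<longrightarrow> j < length p \<longrightarrow> E (p ! i) (p ! j) \<longrightarrow> j = Suc i)"

text \<open>A shortest walk between two vertices admits no shortcut.\<close>
lemma walk_in_imp_chordless:
  assumes "walk_in E S p0"
  obtains p where "walk_in E S p" "hd p = hd p0" "last p = last p0" "chordless E p"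
proof -
  define joins where "joins q \<longleftrightarrow> walk_in E S q \<and> hd q = hd p0 \<and> last q = last p0" for q
  obtain p where p: "joins p" and shortest: "\<And>q. joins q \<Longrightarrow> length p \<le> length q"
    using ex_has_least_nat[of joins p0 length] assms unfolding joins_def by blast
  have no_shortcut: "\<not> (p ! i = p ! j \<or> (Suc i < j \<and> E (p ! i) (p ! j)))"
    if "i < j" "j < length p" for i j
    using walk_in_shortcut[of E S p i j] that p shortest unfolding joins_def
    by (metis leD)
  have "chordless E p"
    unfolding chordless_def distinct_conv_nth
  proof (intro conjI allI impI)
    fix i j assume "i < length p" "j < length p" "i \<noteq> j"
    then show "p ! i \<noteq> p ! j" using no_shortcut by (metis linorder_neqE_nat)
  next
    fix i j assume "i < j" "j < length p" "E (p ! i) (p ! j)"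
    then show "j = Suc i" using no_shortcut[of i j] by (metis Suc_lessI)
  qed
  with p that show thesis unfolding joins_def by blast
qed

lemma simple_graph_sym: "simple_graph V E \<Longrightarrow> E u v \<Longrightarrow> E v u"
  by (simp add: simple_graph_def)

lemma simple_graph_irrefl: "simple_graph V E \<Longrightarrow> \<not> E u u"
  by (auto simp: simple_graph_def)

lemma simple_graph_edge_in: "simple_graph V E \<Longrightarrow> E u v \<Longrightarrow> u \<in> V \<and> v \<in> V"
  by (simp add: simple_graph_def)

definition connected_in :: "('a \<Rightarrow> 'a \<Rightarrow> bool) \<Rightarrow> 'a set \<Rightarrow> bool" where
  "connected_in E S \<longleftrightarrow> (\<forall>x\<in>S. \<forall>y\<in>S. \<exists>p. walk_in E S p \<and> hd p = x \<and> last p = y)"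

lemma conn_radius_le_imp_connected_in:
  assumes sym: "\<And>u v. E u v \<Longrightarrow> E v u" and "conn_radius_le E S t"
  shows "connected_in E S"
  unfolding connected_in_def
proof (intro ballI)
  fix x y assume "x \<in> S" "y \<in> S"
  obtain c where c: "\<forall>z\<in>S. \<exists>p. walk_in E S p \<and> hd p = c \<and> last p = z"
    using assms(2) unfolding conn_radius_le_def by blast
  obtain px where px: "walk_in E S px" "hd px = c" "last px = x" using c \<open>x \<in> S\<close> by blast
  obtain py where py: "walk_in E S py" "hd py = c" "last py = y" using c \<open>y \<in> S\<close> by blast
  show "\<exists>p. walk_in E S p \<and> hd p = x \<and> last p = y"
    using walk_in_join[of E S px py] sym px py by simp
qed

definition component :: "('a \<Rightarrow> 'a \<Rightarrow> bool) \<Rightarrow> 'a set \<Rightarrow> 'a \<Rightarrow> 'a set" where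
  "component E R b = {v. \<exists>p. walk_in E R p \<and> hd p = b \<and> last p = v}"

lemma component_subset: "component E R b \<subseteq> R"
  by (auto simp: component_def walk_in_def)

lemma self_in_component: "b \<in> R \<Longrightarrow> b \<in> component E R b"
  unfolding component_def by (intro CollectI exI[of _ "[b]"]) simp

lemma component_closed:
  assumes "v \<in> component E R b" "w \<in> R" "E v w"
  shows "w \<in> component E R b"
proof -
  obtain p where p: "walk_in E R p" "hd p = b" "last p = v"
    using assms(1) by (auto simp: component_def)
  then have "walk_in E R (p @ [w]) \<and> hd (p @ [w]) = b \<and> last (p @ [w]) = w"
    using walk_in_append[OF p(1), of "[w]"] walk_in_nonempty[OF p(1)] assms by simp
  then show ?thesis unfolding component_def by blast
qed

lemma walk_in_subset_component:
  assumes "walk_in E R p" "hd p = b"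
  shows "set p \<subseteq> component E R b"
proof
  fix v assume "v \<in> set p"
  then obtain k where k: "k < length p" "p ! k = v" by (auto simp: in_set_conv_nth)
  then have "walk_in E R (take (Suc k) p) \<and> hd (take (Suc k) p) = b \<and> last (take (Suc k) p) = v"
    using walk_in_take[OF assms(1), of "Suc k"] assms(2)
    by (simp, simp add: take_Suc_conv_app_nth)
  then show "v \<in> component E R b" unfolding component_def by blast
qed

lemma connected_in_component:
  assumes sym: "\<And>u v. E u v \<Longrightarrow> E v u"
  shows "connected_in E (component E R b)"
  unfolding connected_in_def
proof (intro ballI)
  fix x y assume "x \<in> component E R b" "y \<in> component E R b"
  then obtain px py where p: "walk_in E R px" "hd px = b" "last px = x"
    and q: "walk_in E R py" "hd py = b" "last py = y"
    by (auto simp: component_def)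
  have "walk_in E (component E R b) px" "walk_in E (component E R b) py"
    using walk_in_mono[OF p(1) walk_in_subset_component[OF p(1,2)]]
      walk_in_mono[OF q(1) walk_in_subset_component[OF q(1,2)]] by blast+
  then show "\<exists>r. walk_in E (component E R b) r \<and> hd r = x \<and> last r = y"
    using walk_in_join[of E "component E R b" px py] sym p q by simp
qed

lemma component_boundary_nbhd:
  assumes sym: "\<And>u v. E u v \<Longrightarrow> E v u"
    and c: "c \<in> component E (V - insert a {v. E a v}) b" "E c s"
    and s: "s \<in> V" "s \<notin> component E (V - insert a {v. E a v}) b"
  shows "E a s"
proof (rule ccontr)
  assume "\<not> E a s"
  have "c \<in> V - insert a {v. E a v}" using c(1) component_subset by fast
  then have "s \<noteq> a" using c(2) sym[of c a] by auto
  with \<open>\<not> E a s\<close> s(1) have "s \<in> V - insert a {v. E a v}" by simp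
  then have "s \<in> component E (V - insert a {v. E a v}) b" by (rule component_closed[OF c(1) _ c(2)])
  with s(2) show False by contradiction
qed

definition induced_edges :: "('a \<Rightarrow> 'a \<Rightarrow> bool) \<Rightarrow> 'a set \<Rightarrow> 'a \<Rightarrow> 'a \<Rightarrow> bool" where
  "induced_edges E U u v \<longleftrightarrow> E u v \<and> u \<in> U \<and> v \<in> U"

lemma simple_graph_induced: "simple_graph V E \<Longrightarrow> U \<subseteq> V \<Longrightarrow> simple_graph U (induced_edges E U)"
  unfolding simple_graph_def induced_edges_def by (auto intro: finite_subset)

lemma chordal_induced:
  assumes "chordal V E" "U \<subseteq> V"
  shows "chordal U (induced_edges E U)"
  unfolding chordal_def
proof (intro allI impI)
  fix xs assume "induced_cycle U (induced_edges E U) xs"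
  then have "induced_cycle V E xs"
    unfolding induced_cycle_def induced_edges_def using assms(2) by (auto simp: subset_iff)
  then show "length xs < 4" using assms(1) unfolding chordal_def by blast
qed

lemma connected_in_induced:
  assumes "connected_in E S" "S \<subseteq> U"
  shows "connected_in (induced_edges E U) S"
  unfolding connected_in_def
proof (intro ballI)
  fix x y assume "x \<in> S" "y \<in> S"
  then obtain p where p: "walk_in E S p" "hd p = x" "last p = y"
    using assms(1) unfolding connected_in_def by blast
  have "walk_in (induced_edges E U) S p"
    by (rule walk_in_mono[OF p(1)]) (use assms(2) p(1) in \<open>auto simp: walk_in_def induced_edges_def\<close>)
  then show "\<exists>p. walk_in (induced_edges E U) S p \<and> hd p = x \<and> last p = y" using p by blast
qed

definition simplicial :: "'a set \<Rightarrow> ('a \<Rightarrow> 'a \<Rightarrow> bool) \<Rightarrow> 'a \<Rightarrow> bool" where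
  "simplicial V E z \<longleftrightarrow> z \<in> V \<and> (\<forall>x y. E z x \<longrightarrow> E z y \<longrightarrow> x \<noteq> y \<longrightarrow> E x y)"

lemma simplicial_induced_imp_simplicial:
  assumes "simplicial U (induced_edges E U) z" "\<And>w. E z w \<Longrightarrow> w \<in> U" "U \<subseteq> V"
  shows "simplicial V E z"
  using assms unfolding simplicial_def induced_edges_def by blast

lemma chordless_walk_edge_iff:
  assumes sg: "simple_graph V E" and w: "walk_in E S p" and c: "chordless E p"
    and ij: "i < length p" "j < length p"
  shows "E (p ! i) (p ! j) \<longleftrightarrow> j = Suc i \<or> i = Suc j"
proof -
  consider "i < j" | "i = j" | "j < i" by linarith
  then show ?thesis
  proof cases
    case 1 then show ?thesis using c w ij unfolding chordless_def walk_in_def by auto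
  next
    case 2 then show ?thesis using simple_graph_irrefl[OF sg] by auto
  next
    case 3 then show ?thesis
      using c w ij simple_graph_sym[OF sg] unfolding chordless_def walk_in_def by (metis less_irrefl)
  qed
qed

lemma walk_in_nonadjacent_length:
  assumes "walk_in E S p" "hd p \<noteq> last p" "\<not> E (hd p) (last p)"
  shows "3 \<le> length p"
proof (rule ccontr)
  assume "\<not> 3 \<le> length p"
  with walk_in_nonempty[OF assms(1)] have "\<exists>u v. p = [u] \<or> p = [u, v]"
    by (cases p rule: remdups_adj.cases) (auto simp: Suc_le_eq)
  then show False using assms by (auto simp: walk_in_Cons_Cons)
qed

text \<open>A vertex seeing exactly the two ends of a chordless path closes an induced cycle with it.\<close>
lemma chordal_apex_chordless_path:
  assumes sg: "simple_graph V E" and ch: "chordal V E"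
    and p: "walk_in E V p" "chordless E p" and a: "a \<in> V" "a \<notin> set p"
    and ends: "E a (hd p)" "E a (last p)"
    and inner: "\<And>i. 0 < i \<Longrightarrow> i < length p - 1 \<Longrightarrow> \<not> E a (p ! i)"
  shows "length p < 3"
proof (rule ccontr)
  assume len: "\<not> length p < 3"
  let ?n = "length p"
  have ne: "p \<noteq> []" using len by auto
  then have "E a (p ! 0)" "E a (p ! (?n - 1))"
    using ends by (simp_all add: hd_conv_nth last_conv_nth)
  then have Ea: "E a (p ! k) \<longleftrightarrow> k = 0 \<or> k = ?n - 1" if "k < ?n" for k
    using that inner by (cases "k = 0 \<or> k = ?n - 1") auto
  have Ea': "E (p ! k) a \<longleftrightarrow> k = 0 \<or> k = ?n - 1" if "k < ?n" for k
    using Ea[OF that] simple_graph_sym[OF sg] by blast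
  have Ep: "E (p ! i) (p ! j) \<longleftrightarrow> j = Suc i \<or> i = Suc j" if "i < ?n" "j < ?n" for i j
    using chordless_walk_edge_iff[OF sg p(1,2) that] .
  have "induced_cycle V E (a # p)"
    unfolding induced_cycle_def
  proof (intro conjI allI impI)
    fix i j assume i: "i < length (a # p)" and j: "j < length (a # p)"
    have succ: "Suc i mod length (a # p) = (if i = ?n then 0 else Suc i)"
      "Suc j mod length (a # p) = (if j = ?n then 0 else Suc j)"
      using i j by auto
    show "E ((a # p) ! i) ((a # p) ! j) \<longleftrightarrow>
          (j = Suc i mod length (a # p) \<or> i = Suc j mod length (a # p))"
    proof (cases i; cases j)
      assume "i = 0" "j = 0" then show ?thesis using simple_graph_irrefl[OF sg] succ len by auto
    next
      fix j' assume "i = 0" "j = Suc j'" then show ?thesis using Ea[of j'] j succ by auto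
    next
      fix i' assume "i = Suc i'" "j = 0" then show ?thesis using Ea'[of i'] i succ by auto
    next
      fix i' j' assume "i = Suc i'" "j = Suc j'"
      moreover have "i' < ?n" "j' < ?n" using i j calculation by simp_all
      ultimately show ?thesis using Ep[of i' j'] succ ne by simp arith
    qed
  qed (use p a len in \<open>auto simp: chordless_def walk_in_def\<close>)
  then have "length (a # p) < 4" using ch unfolding chordal_def by blast
  with len show False by simp
qed

lemma chordal_common_neighbours_adjacent:
  assumes sg: "simple_graph V E" and ch: "chordal V E"
    and C: "connected_in E C" "C \<subseteq> V" and a: "a \<notin> C" "\<And>c. c \<in> C \<Longrightarrow> \<not> E a c"
    and x: "x \<notin> C" "E a x" "cx \<in> C" "E x cx"
    and y: "y \<notin> C" "E a y" "cy \<in> C" "E y cy"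
    and "x \<noteq> y"
  shows "E x y"
proof (rule ccontr)
  assume "\<not> E x y"
  define T where "T = insert x (insert y C)"
  have TV: "T \<subseteq> V" using C(2) x y simple_graph_edge_in[OF sg] unfolding T_def by blast
  obtain q where q: "walk_in E C q" "hd q = cx" "last q = cy"
    using C(1) x(3) y(3) unfolding connected_in_def by blast
  have "walk_in E T q" using walk_in_mono[OF q(1)] q(1) unfolding T_def walk_in_def by blast
  then have "walk_in E T ([x] @ q)" "last ([x] @ q) = cy"
    using walk_in_append[of E T "[x]" q] walk_in_nonempty[OF q(1)] q x unfolding T_def by auto
  then have "walk_in E T (([x] @ q) @ [y])"
    using walk_in_append[of E T "[x] @ q" "[y]"] simple_graph_sym[OF sg y(4)] unfolding T_def by auto
  then obtain p where p: "walk_in E T p" "hd p = x" "last p = y" "chordless E p"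
    by (rule walk_in_imp_chordless) simp
  have "3 \<le> length p" using walk_in_nonadjacent_length[OF p(1)] p(2,3) \<open>\<not> E x y\<close> \<open>x \<noteq> y\<close> by simp
  moreover have "length p < 3"
  proof (rule chordal_apex_chordless_path[OF sg ch _ p(4)])
    show "walk_in E V p" using walk_in_mono[OF p(1)] TV p(1) by (auto simp: walk_in_def)
    show "a \<in> V" using simple_graph_edge_in[OF sg x(2)] by blast
    show "a \<notin> set p"
      using p(1) a(1) x(2) y(2) simple_graph_irrefl[OF sg] unfolding T_def walk_in_def by auto
    show "E a (hd p)" "E a (last p)" using p(2,3) x(2) y(2) by simp_all
  next
    fix i assume i: "0 < i" "i < length p - 1"
    have "p ! i \<noteq> hd p" "p ! i \<noteq> last p"
      using p(4) i walk_in_nonempty[OF p(1)]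
      by (auto simp: chordless_def hd_conv_nth last_conv_nth nth_eq_iff_index_eq)
    moreover have "p ! i \<in> T" using p(1) i unfolding walk_in_def by auto
    ultimately have "p ! i \<in> C" using p(2,3) unfolding T_def by auto
    then show "\<not> E a (p ! i)" using a(2) by blast
  qed
  ultimately show False by simp
qed

text \<open>A simplicial vertex of G[U] outside N[u], for a vertex u adjacent to all of U - C, lies in C
  and is then simplicial in G.\<close>
lemma simplicial_in_clique_bounded_part:
  assumes sg: "simple_graph V E" and "U \<subseteq> V" "C \<subseteq> U" "b \<in> C"
    and nbr: "\<And>z w. z \<in> C \<Longrightarrow> E z w \<Longrightarrow> w \<in> U"
    and clique: "\<And>x y. x \<in> U - C \<Longrightarrow> y \<in> U - C \<Longrightarrow> x \<noteq> y \<Longrightarrow> E x y"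
    and simplicial_U: "\<And>u v. u \<in> U \<Longrightarrow> v \<in> U \<Longrightarrow> u \<noteq> v \<Longrightarrow> \<not> induced_edges E U u v \<Longrightarrow>
      \<exists>z. z \<noteq> u \<and> \<not> induced_edges E U u z \<and> simplicial U (induced_edges E U) z"
  shows "\<exists>z\<in>C. simplicial V E z"
proof (cases "\<forall>u\<in>U. \<forall>v\<in>U. u \<noteq> v \<longrightarrow> E u v")
  case True
  have "simplicial V E b"
    unfolding simplicial_def
  proof (intro conjI allI impI)
    fix x y assume "E b x" "E b y" "x \<noteq> y"
    then show "E x y" using True nbr[OF \<open>b \<in> C\<close>] by blast
  qed (use assms(2-4) in blast)
  then show ?thesis using \<open>b \<in> C\<close> by blast
next
  case False
  have "\<exists>u v. u \<in> U \<and> v \<in> U \<and> u \<noteq> v \<and> \<not> E u v \<and> (\<forall>s\<in>U - C. s \<noteq> u \<longrightarrow> E u s)"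
  proof (cases "\<exists>s\<in>U - C. \<exists>v\<in>U. s \<noteq> v \<and> \<not> E s v")
    case True
    then obtain s v where "s \<in> U - C" "v \<in> U" "s \<noteq> v" "\<not> E s v" by blast
    then show ?thesis using clique by blast
  next
    case no_boundary: False
    obtain u v where "u \<in> U" "v \<in> U" "u \<noteq> v" "\<not> E u v" using False by blast
    moreover have "E u s" if "s \<in> U - C" "s \<noteq> u" for s
      using no_boundary that \<open>u \<in> U\<close> simple_graph_sym[OF sg] by blast
    ultimately show ?thesis by blast
  qed
  then obtain u v where uv: "u \<in> U" "v \<in> U" "u \<noteq> v" "\<not> E u v"
    and u_boundary: "\<And>s. s \<in> U - C \<Longrightarrow> s \<noteq> u \<Longrightarrow> E u s"
    by blast
  have "\<not> induced_edges E U u v" using uv(4) by (simp add: induced_edges_def)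
  then obtain z where z: "z \<noteq> u" "\<not> induced_edges E U u z" "simplicial U (induced_edges E U) z"
    using simplicial_U[OF uv(1-3)] by blast
  have "z \<in> U" using z(3) unfolding simplicial_def by blast
  then have "z \<in> C" using u_boundary z(1,2) uv(1) unfolding induced_edges_def by blast
  then show ?thesis
    using simplicial_induced_imp_simplicial[OF z(3) nbr[OF \<open>z \<in> C\<close>] assms(2)] by blast
qed

text \<open>Dirac: the component C of b in G - N[a] together with its neighbourhood, which lies in N(a)
  and is a clique, spans a smaller chordal graph.\<close>
lemma chordal_simplicial_nonadjacent:
  assumes "simple_graph V E" "chordal V E" "a \<in> V" "b \<in> V" "a \<noteq> b" "\<not> E a b"
  shows "\<exists>z. z \<noteq> a \<and> \<not> E a z \<and> simplicial V E z"
  using assms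
proof (induction "card V" arbitrary: V E a b rule: less_induct)
  case less
  note sg = less.prems(1) and ch = less.prems(2)
  have sym: "\<And>u v. E u v \<Longrightarrow> E v u" using simple_graph_sym[OF sg] .
  define R where "R = V - insert a {v. E a v}"
  define C where "C = component E R b"
  define S where "S = {s \<in> V - C. \<exists>c\<in>C. E s c}"
  define U where "U = C \<union> S"
  have bC: "b \<in> C" using less.prems unfolding C_def R_def by (auto intro: self_in_component)
  have "C \<subseteq> R" unfolding C_def by (rule component_subset)
  then have CV: "C \<subseteq> V" and Ca: "\<And>c. c \<in> C \<Longrightarrow> c \<noteq> a \<and> \<not> E a c"
    unfolding R_def by auto
  have connC: "connected_in E C" unfolding C_def using connected_in_component[OF sym] .
  have SN: "E a s" if "s \<in> S" for s
  proof -
    obtain c where c: "c \<in> C" "E c s" "s \<in> V" "s \<notin> C"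
      using \<open>s \<in> S\<close> sym unfolding S_def by blast
    show ?thesis using component_boundary_nbhd[OF sym c[unfolded C_def R_def]] .
  qed
  have nbrC: "w \<in> U" if "z \<in> C" "E z w" for z w
  proof (cases "w \<in> C")
    case False
    moreover have "w \<in> V" using simple_graph_edge_in[OF sg \<open>E z w\<close>] by blast
    ultimately show ?thesis using that sym unfolding U_def S_def by blast
  qed (simp add: U_def)
  have S_clique: "E x y" if "x \<in> U - C" "y \<in> U - C" "x \<noteq> y" for x y
  proof -
    have "x \<in> S" "y \<in> S" using that unfolding U_def by blast+
    obtain cx where "cx \<in> C" "E x cx" using \<open>x \<in> S\<close> unfolding S_def by blast
    moreover obtain cy where "cy \<in> C" "E y cy" using \<open>y \<in> S\<close> unfolding S_def by blast
    moreover have "x \<notin> C" "y \<notin> C" using that by blast+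
    ultimately show ?thesis
      using chordal_common_neighbours_adjacent[OF sg ch connC CV _ _ _ _ _ _ _ _ _ _ \<open>x \<noteq> y\<close>]
        Ca SN[OF \<open>x \<in> S\<close>] SN[OF \<open>y \<in> S\<close>] by blast
  qed
  have UV: "U \<subseteq> V" using CV unfolding U_def S_def by blast
  have "a \<notin> U" using Ca SN simple_graph_irrefl[OF sg] unfolding U_def by blast
  then have "U \<subset> V" using UV less.prems(3) by blast
  moreover have "finite V" using sg unfolding simple_graph_def by blast
  ultimately have "card U < card V" using psubset_card_mono by blast
  note IH = less.hyps[OF this simple_graph_induced[OF sg UV] chordal_induced[OF ch UV]]
  have "C \<subseteq> U" unfolding U_def by blast
  have "\<exists>z\<in>C. simplicial V E z"
  proof (rule simplicial_in_clique_bounded_part[OF sg UV \<open>C \<subseteq> U\<close> bC])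
    show "\<And>z w. z \<in> C \<Longrightarrow> E z w \<Longrightarrow> w \<in> U" by (rule nbrC)
    show "\<And>x y. x \<in> U - C \<Longrightarrow> y \<in> U - C \<Longrightarrow> x \<noteq> y \<Longrightarrow> E x y" by (rule S_clique)
  qed (rule IH)
  then show ?case using Ca by blast
qed

lemma chordal_has_simplicial:
  assumes sg: "simple_graph V E" and "chordal V E" "V \<noteq> {}"
  shows "\<exists>z. simplicial V E z"
proof (cases "\<exists>a\<in>V. \<exists>b\<in>V. a \<noteq> b \<and> \<not> E a b")
  case True
  then obtain a b where "a \<in> V" "b \<in> V" "a \<noteq> b" "\<not> E a b" by blast
  then show ?thesis using chordal_simplicial_nonadjacent[OF assms(1,2)] by blast
next
  case False
  then have "simplicial V E z" if "z \<in> V" for z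
    using that simple_graph_edge_in[OF sg] unfolding simplicial_def by blast
  then show ?thesis using \<open>V \<noteq> {}\<close> by blast
qed

text \<open>A shortest path never passes through a simplicial vertex.\<close>
lemma connected_in_Diff_simplicial:
  assumes sg: "simple_graph V E" and s: "simplicial V E s" and S: "connected_in E S"
  shows "connected_in E (S - {s})"
  unfolding connected_in_def
proof (intro ballI)
  fix x y assume x: "x \<in> S - {s}" and y: "y \<in> S - {s}"
  obtain p0 where p0: "walk_in E S p0" "hd p0 = x" "last p0 = y"
    using S x y unfolding connected_in_def by blast
  obtain p where p: "walk_in E S p" "hd p = x" "last p = y" "chordless E p"
    using walk_in_imp_chordless[OF p0(1)] p0(2,3) by metis
  have ne: "p \<noteq> []" using walk_in_nonempty[OF p(1)] .
  have "s \<notin> set p"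
  proof
    assume "s \<in> set p"
    then obtain i where i: "i < length p" "p ! i = s" by (auto simp: in_set_conv_nth)
    have "i \<noteq> 0" using i x p(2) ne by (metis DiffD2 hd_conv_nth singletonI)
    moreover have "i \<noteq> length p - 1" using i y p(3) ne by (auto simp: last_conv_nth)
    ultimately obtain k where k: "i = Suc k" "Suc (Suc k) < length p" using i
      by (metis Suc_lessI diff_Suc_1 not0_implies_Suc)
    have "E (p ! k) (p ! Suc k)" "E (p ! Suc (Suc k)) (p ! Suc k)"
      using chordless_walk_edge_iff[OF sg p(1,4), of k "Suc k"]
        chordless_walk_edge_iff[OF sg p(1,4), of "Suc (Suc k)" "Suc k"] k(2) by simp_all
    then have "E (p ! k) s" "E (p ! Suc (Suc k)) s" using i(2) k(1) by simp_all
    moreover have "p ! k \<noteq> p ! Suc (Suc k)"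
      using p(4) k by (simp add: chordless_def nth_eq_iff_index_eq)
    ultimately have "E (p ! k) (p ! Suc (Suc k))"
      using s simple_graph_sym[OF sg] unfolding simplicial_def by blast
    then show False using chordless_walk_edge_iff[OF sg p(1,4)] k by simp
  qed
  then have "walk_in E (S - {s}) p"
    using walk_in_mono[OF p(1)] p(1) unfolding walk_in_def by blast
  then show "\<exists>p. walk_in E (S - {s}) p \<and> hd p = x \<and> last p = y" using p by blast
qed

lemma connected_in_obtain_neighbour:
  assumes "connected_in E S" "s \<in> S" "x \<in> S" "x \<noteq> s"
  obtains c where "c \<in> S" "E s c"
proof -
  obtain p where p: "walk_in E S p" "hd p = s" "last p = x"
    using assms unfolding connected_in_def by blast
  then obtain y ys where "p = s # y # ys"
    using assms(4) walk_in_nonempty[OF p(1)] by (cases p rule: remdups_adj.cases) auto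
  moreover have "set p \<subseteq> S" using p(1) by (simp add: walk_in_def)
  ultimately show thesis using p(1) that[of y] by (simp add: walk_in_Cons_Cons)
qed

definition branch_sets :: "'a set \<Rightarrow> ('a \<Rightarrow> 'a \<Rightarrow> bool) \<Rightarrow> 'a set \<Rightarrow> ('a \<Rightarrow> 'a set) \<Rightarrow> bool" where
  "branch_sets V E W Vs \<longleftrightarrow>
     (\<forall>w\<in>W. Vs w \<subseteq> V \<and> Vs w \<noteq> {} \<and> connected_in E (Vs w)) \<and>
     (\<forall>u\<in>W. \<forall>v\<in>W. u \<noteq> v \<longrightarrow> Vs u \<inter> Vs v = {})"

definition minor_edges :: "('a \<Rightarrow> 'a \<Rightarrow> bool) \<Rightarrow> 'a set \<Rightarrow> ('a \<Rightarrow> 'a set) \<Rightarrow> 'a \<Rightarrow> 'a \<Rightarrow> bool" where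
  "minor_edges E W Vs u v \<longleftrightarrow> u \<in> W \<and> v \<in> W \<and> u \<noteq> v \<and> (\<exists>a\<in>Vs u. \<exists>b\<in>Vs v. E a b)"

lemma minor_edges_sym:
  "(\<And>a b. E a b \<Longrightarrow> E b a) \<Longrightarrow> minor_edges E W Vs u v \<Longrightarrow> minor_edges E W Vs v u"
  unfolding minor_edges_def by blast

lemma simplicial_singleton_branch_set:
  assumes s: "simplicial V E s" and B: "branch_sets V E W Vs" and w0: "w0 \<in> W" "Vs w0 = {s}"
  shows "simplicial W (minor_edges E W Vs) w0"
  unfolding simplicial_def
proof (intro conjI allI impI)
  fix u v assume "minor_edges E W Vs w0 u" "minor_edges E W Vs w0 v" "u \<noteq> v"
  then obtain a b where "a \<in> Vs u" "b \<in> Vs v" "E s a" "E s b" "u \<in> W" "v \<in> W"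
    using w0(2) unfolding minor_edges_def by auto
  moreover have "a \<noteq> b" using B \<open>u \<noteq> v\<close> calculation unfolding branch_sets_def by blast
  ultimately show "minor_edges E W Vs u v"
    using s \<open>u \<noteq> v\<close> unfolding simplicial_def minor_edges_def by blast
qed (fact w0(1))

lemma branch_sets_Diff_simplicial:
  assumes sg: "simple_graph V E" and s: "simplicial V E s" and B: "branch_sets V E W Vs"
    and not_single: "\<And>w. w \<in> W \<Longrightarrow> Vs w \<noteq> {s}"
  shows "branch_sets (V - {s}) (induced_edges E (V - {s})) W (\<lambda>w. Vs w - {s})"
  unfolding branch_sets_def
proof (intro conjI ballI impI)
  fix w assume w: "w \<in> W"
  then show "Vs w - {s} \<subseteq> V - {s}" "Vs w - {s} \<noteq> {}"
    using B not_single[OF w] unfolding branch_sets_def by blast+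
  show "connected_in (induced_edges E (V - {s})) (Vs w - {s})"
    using connected_in_induced connected_in_Diff_simplicial[OF sg s] B w \<open>Vs w - {s} \<subseteq> V - {s}\<close>
    unfolding branch_sets_def by blast
qed (use B in \<open>unfold branch_sets_def, blast\<close>)

text \<open>An edge at s can be rerouted through a neighbour c of s in the same branch set, since
  both ends of the new edge lie in the clique N(s).\<close>
lemma minor_edges_Diff_simplicial:
  assumes sg: "simple_graph V E" and s: "simplicial V E s" and B: "branch_sets V E W Vs"
    and not_single: "\<And>w. w \<in> W \<Longrightarrow> Vs w \<noteq> {s}"
  shows "minor_edges (induced_edges E (V - {s})) W (\<lambda>w. Vs w - {s}) = minor_edges E W Vs"
proof (intro ext iffI)
  fix u v assume "minor_edges (induced_edges E (V - {s})) W (\<lambda>w. Vs w - {s}) u v"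
  then show "minor_edges E W Vs u v" unfolding minor_edges_def induced_edges_def by blast
next
  have sym: "\<And>a b. E a b \<Longrightarrow> E b a" using simple_graph_sym[OF sg] .
  have reroute: "\<exists>a'\<in>Vs u - {s}. E a' b"
    if uv: "u \<in> W" "v \<in> W" "u \<noteq> v" and ab: "a \<in> Vs u" "b \<in> Vs v" "E a b" "b \<noteq> s"
    for u v a b
  proof (cases "a = s")
    case True
    obtain x where "x \<in> Vs u" "x \<noteq> s"
      using B not_single[OF uv(1)] ab(1) unfolding branch_sets_def by blast
    then obtain c where c: "c \<in> Vs u" "E s c"
      using connected_in_obtain_neighbour[of E "Vs u" s x] B uv(1) ab(1) True
      unfolding branch_sets_def by blast
    have "c \<noteq> b" using B uv ab(2) c(1) unfolding branch_sets_def by blast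
    then have "E c b" using s c(2) ab(3) True unfolding simplicial_def by blast
    moreover have "c \<noteq> s" using c(2) simple_graph_irrefl[OF sg] by blast
    ultimately show ?thesis using c(1) by blast
  qed (use ab in blast)
  fix u v assume "minor_edges E W Vs u v"
  then obtain a b where uv: "u \<in> W" "v \<in> W" "u \<noteq> v" and ab: "a \<in> Vs u" "b \<in> Vs v" "E a b"
    unfolding minor_edges_def by blast
  have "\<exists>a'\<in>Vs u - {s}. E a' b"
  proof (cases "b = s")
    case True
    then have "a \<noteq> s" using ab(3) simple_graph_irrefl[OF sg] by blast
    then show ?thesis using ab by blast
  qed (use reroute[OF uv ab] in blast)
  then obtain a' where a': "a' \<in> Vs u - {s}" "E a' b" by blast
  then obtain b' where b': "b' \<in> Vs v - {s}" "E b' a'"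
    using reroute[OF uv(2,1) _ ab(2) _ sym] uv(3) by blast
  have "Vs u \<subseteq> V" "Vs v \<subseteq> V" using B uv unfolding branch_sets_def by blast+
  then show "minor_edges (induced_edges E (V - {s})) W (\<lambda>w. Vs w - {s}) u v"
    using uv a' b' sym unfolding minor_edges_def induced_edges_def by blast
qed

lemma chordal_minor_has_simplicial:
  assumes "simple_graph V E" "chordal V E" "branch_sets V E W Vs" "W \<noteq> {}"
  shows "\<exists>w. simplicial W (minor_edges E W Vs) w"
  using assms
proof (induction "card V" arbitrary: V E Vs rule: less_induct)
  case less
  note sg = less.prems(1) and B = less.prems(3)
  have "V \<noteq> {}" using B less.prems(4) unfolding branch_sets_def by blast
  then obtain s where s: "simplicial V E s" using chordal_has_simplicial[OF sg less.prems(2)] by blast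
  show ?case
  proof (cases "\<exists>w0\<in>W. Vs w0 = {s}")
    case True
    then show ?thesis using simplicial_singleton_branch_set[OF s B] by blast
  next
    case False
    then have not_single: "\<And>w. w \<in> W \<Longrightarrow> Vs w \<noteq> {s}" by blast
    have "finite V" "s \<in> V" using s sg unfolding simplicial_def simple_graph_def by blast+
    then have "card (V - {s}) < card V" by (rule card_Diff1_less)
    from less.hyps[OF this simple_graph_induced[OF sg] chordal_induced[OF less.prems(2)]
        branch_sets_Diff_simplicial[OF sg s B not_single] less.prems(4)]
    show ?thesis using minor_edges_Diff_simplicial[OF sg s B not_single] by simp
  qed
qed

lemma clique_partition_card_pos:
  assumes "N \<noteq> {}" "clique_partition N F P" "finite P"
  shows "0 < card P"
proof -
  have "P \<noteq> {}" using assms(1,2) unfolding clique_partition_def by auto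
  then show ?thesis using assms(3) by (simp add: card_gt_0_iff)
qed

lemma clique_cover_number_pos:
  assumes "finite N" "N \<noteq> {}"
  shows "0 < clique_cover_number N F"
proof -
  let ?covers = "\<lambda>n. \<exists>P. clique_partition N F P \<and> finite P \<and> card P = n"
  have "clique_partition N F ((\<lambda>v. {v}) ` N)"
    unfolding clique_partition_def is_clique_def by blast
  moreover have "card ((\<lambda>v. {v}) ` N) = card N" by (rule card_image) (simp add: inj_on_def)
  ultimately have "?covers (card N)" using assms(1) by blast
  then have "?covers (clique_cover_number N F)"
    unfolding clique_cover_number_def by (rule LeastI)
  then show ?thesis using clique_partition_card_pos[OF assms(2)] by metis
qed

lemma clique_cover_number_clique:
  assumes "N \<noteq> {}" "is_clique F N"
  shows "clique_cover_number N F = 1"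
  unfolding clique_cover_number_def
proof (rule Least_equality)
  show "\<exists>P. clique_partition N F P \<and> finite P \<and> card P = 1"
    using assms by (intro exI[of _ "{N}"]) (simp add: clique_partition_def)
next
  fix n assume "\<exists>P. clique_partition N F P \<and> finite P \<and> card P = n"
  then show "1 \<le> n" using clique_partition_card_pos[OF assms(1)] by (metis Suc_leI One_nat_def)
qed

lemma is_clique_closed_nbhd_simplicial:
  assumes "simplicial W F w" "\<And>u v. F u v \<Longrightarrow> F v u"
  shows "is_clique F (closed_nbhd W F w)"
  unfolding is_clique_def
proof (intro ballI impI)
  fix x y assume "x \<in> closed_nbhd W F w" "y \<in> closed_nbhd W F w" "x \<noteq> y"
  then consider "x = w" "F w y" | "y = w" "F w x" | "F w x" "F w y"
    unfolding closed_nbhd_def by auto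
  then show "F x y" using assms \<open>x \<noteq> y\<close> unfolding simplicial_def by cases blast+
qed

lemma tilde_beta_simplicial:
  assumes fin: "finite W" and w: "simplicial W F w" and sym: "\<And>u v. F u v \<Longrightarrow> F v u"
  shows "tilde_beta W F = 1"
proof -
  define H where "H x u v \<longleftrightarrow> F u v \<and> u \<in> closed_nbhd W F x \<and> v \<in> closed_nbhd W F x" for x u v
  let ?f = "\<lambda>x. clique_cover_number (closed_nbhd W F x) (H x)"
  have fin_nbhd: "finite (closed_nbhd W F x)" and ne_nbhd: "closed_nbhd W F x \<noteq> {}" for x
    using fin unfolding closed_nbhd_def by auto
  have "w \<in> W" using w unfolding simplicial_def by blast
  have "is_clique (H w) (closed_nbhd W F w)"
    using is_clique_closed_nbhd_simplicial[OF w sym] unfolding is_clique_def H_def by simp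
  then have "?f w = 1" by (rule clique_cover_number_clique[OF ne_nbhd])
  moreover have "1 \<le> ?f x" for x
    using clique_cover_number_pos[OF fin_nbhd ne_nbhd] by (simp add: Suc_le_eq)
  ultimately have "Min (?f ` W) = 1"
    using fin \<open>w \<in> W\<close> by (intro Min_eqI) (auto intro: rev_image_eqI)
  then show ?thesis unfolding tilde_beta_def H_def .
qed

lemma shallow_minor_branch_sets:
  assumes sg: "simple_graph V E" and "shallow_minor t V E W F"
  obtains Vs where "finite W" "branch_sets V E W Vs" "F = minor_edges E W Vs"
proof -
  obtain Vs where Vs: "\<forall>v\<in>W. Vs v \<subseteq> V \<and> Vs v \<noteq> {} \<and> conn_radius_le E (Vs v) t"
    "\<forall>u\<in>W. \<forall>v\<in>W. u \<noteq> v \<longrightarrow> Vs u \<inter> Vs v = {}"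
    "\<forall>u v. F u v \<longleftrightarrow> u \<in> W \<and> v \<in> W \<and> u \<noteq> v \<and> (\<exists>a\<in>Vs u. \<exists>b\<in>Vs v. E a b)"
    and fin: "finite W"
    using assms(2) unfolding shallow_minor_def by blast
  have "connected_in E (Vs v)" if "v \<in> W" for v
    using conn_radius_le_imp_connected_in[of E, OF simple_graph_sym[OF sg]] Vs(1) that by blast
  then have "branch_sets V E W Vs" using Vs(1,2) unfolding branch_sets_def by blast
  moreover have "F = minor_edges E W Vs" by (intro ext) (simp add: Vs(3) minor_edges_def)
  ultimately show thesis by (rule that[OF fin])
qed

lemma shallow_minor_singleton: "a \<in> V \<Longrightarrow> shallow_minor t V E {a} (\<lambda>_ _. False)"
  unfolding shallow_minor_def conn_radius_le_def
  by (intro conjI exI[of _ "\<lambda>_. {a}"]) (auto intro!: exI[of _ "[a]"])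

lemma chordal_shallow_minor_tilde_beta:
  assumes sg: "simple_graph V E" and ch: "chordal V E"
    and "shallow_minor t V E W F" "W \<noteq> {}"
  shows "tilde_beta W F = 1"
proof -
  obtain Vs where fin: "finite W" and B: "branch_sets V E W Vs" and F: "F = minor_edges E W Vs"
    using shallow_minor_branch_sets[OF sg assms(3)] .
  obtain w where w: "simplicial W F w"
    using chordal_minor_has_simplicial[OF sg ch B assms(4)] unfolding F ..
  have sym: "F v u" if "F u v" for u v
    using minor_edges_sym[of E W Vs u v] simple_graph_sym[OF sg] that unfolding F by blast
  show ?thesis using tilde_beta_simplicial[OF fin w sym] .
qed

theorem theorem2p1:
  fixes V :: "'a set" and E :: "'a \<Rightarrow> 'a \<Rightarrow> bool" and t :: nat
  assumes "simple_graph V E" and "V \<noteq> {}" and "chordal V E"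
  shows "hat_beta t V E = 1"
proof -
  let ?values = "{tilde_beta W F | W F. shallow_minor t V E W F \<and> W \<noteq> {}}"
  obtain a where "a \<in> V" using assms(2) by blast
  then have "tilde_beta {a} (\<lambda>_ _. False) \<in> ?values"
    using shallow_minor_singleton[of a V t E] by blast
  moreover have "?values \<subseteq> {1}"
  proof
    fix x assume "x \<in> ?values"
    then obtain W F where "x = tilde_beta W F" "shallow_minor t V E W F" "W \<noteq> {}" by blast
    then show "x \<in> {1}" using chordal_shallow_minor_tilde_beta[OF assms(1,3)] by simp
  qed
  ultimately have "?values = {1}" by (auto simp: subset_singleton_iff)
  then show ?thesis unfolding hat_beta_def by simp
qed

end
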